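(* Let $\alpha_1,\alpha_2>0$ and set \[ C_{1,2}:=\frac{\mathbb{E}[S_{11}S_{21}]}{1-\mathbb{E}[(1-S_{11})(1-S_{21})]}\sqrt{\frac{(2\mathbb{E}[S_{11}]-\mathbb{E}[S_{11}^2])(2\mathbb{E}[S_{21}]-\mathbb{E}[S_{21}^2])}{\mathbb{E}[S_{11}^2]\,\mathbb{E}[S_{21}^2]}}. \] (a) If $(S_{11},S_{21})=(V_0V_1,V_0V_2)$ with $V_0,V_1,V_2$ independent, $V_0\sim Beta(1+\alpha_1,\alpha_2)$, $V_1,V_2\sim Beta(1,\alpha_1)$, then \[ C_{1,2}=\frac{(\alpha_1+\alpha_2+1)(\alpha_1+2)}{2(\alpha_1+1)(\alpha_1+\alpha_2+2)-(\alpha_1+2)}. \] (b) If $(S_{11},S_{21})=(V_0V_1,V_0)$ with $V_0,V_1$ independent, $V_0\sim Beta(1,\alpha_1)$, $V_1\sim Beta(1+\alpha_1,\alpha_2)$, then \[ C_{1,2}=\frac{2(\alpha_1+1)}{(\alpha_1+2)(2\alpha_1+\alpha_2+1)-\alpha_1}\sqrt{(\alpha_1+1)(\alpha_1+\alpha_2+1)}. \]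
   Context: In the paper $C_{1,2}$ is the correlation $\mathrm{Cor}(G_1(A),G_2(A))$ of two stick-breaking random measures with common atoms and i.i.d. stick vectors distributed as $(S_{11},S_{21})$; the claim here is the explicit evaluation of $C_{1,2}$. *)

theory Defs
  imports "HOL-Probability.Probability"
begin

definition beta_density :: "real \<Rightarrow> real \<Rightarrow> real \<Rightarrow> ennreal" where
  "beta_density a b x =
     ennreal (indicator {0<..<1} x * x powr (a - 1) * (1 - x) powr (b - 1) / Beta a b)"

definition C12 :: "'a measure \<Rightarrow> ('a \<Rightarrow> real) \<Rightarrow> ('a \<Rightarrow> real) \<Rightarrow> real" where
  "C12 M S1 S2 =
     (integral\<^sup>L M (\<lambda>w. S1 w * S2 w)) /
       (1 - integral\<^sup>L M (\<lambda>w. (1 - S1 w) * (1 - S2 w))) *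
     sqrt (((2 * integral\<^sup>L M S1 - integral\<^sup>L M (\<lambda>w. (S1 w)\<^sup>2)) *
            (2 * integral\<^sup>L M S2 - integral\<^sup>L M (\<lambda>w. (S2 w)\<^sup>2))) /
           (integral\<^sup>L M (\<lambda>w. (S1 w)\<^sup>2) * integral\<^sup>L M (\<lambda>w. (S2 w)\<^sup>2)))"

end

theory Submission
  imports Defs
begin

text \<open>For independent Beta sticks every moment entering \<open>C12\<close> factors into Beta moments
  \<open>E X = p / (p + q)\<close> and \<open>E X\<^sup>2 = p (p + 1) / ((p + q) (p + q + 1))\<close>. Since
  \<open>1 - E[(1 - S\<^sub>1) (1 - S\<^sub>2)] = E S\<^sub>1 + E S\<^sub>2 - E[S\<^sub>1 S\<^sub>2]\<close>, \<open>C12\<close> becomes an explicit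
  expression in \<open>x = 1 + a1\<close> and \<open>y = 1 + a1 + a2\<close>, which simplifies to the two closed forms.\<close>

lemma Beta_real_pos: "p > 0 \<Longrightarrow> q > 0 \<Longrightarrow> Beta p q > (0::real)"
  unfolding Beta_def by (simp add: Gamma_real_pos)

lemma Beta_plus1_left_real:
  fixes p q :: real
  assumes "p > 0" "q > 0"
  shows "Beta (p + 1) q = p / (p + q) * Beta p q"
proof -
  have "p \<notin> \<int>\<^sub>\<le>\<^sub>0" using assms nonpos_Ints_nonpos by force
  then have "(p + q) * Beta (p + 1) q = p * Beta p q" by (rule Beta_plus1_left)
  with assms show ?thesis by (simp add: field_simps)
qed

lemma beta_distributed_AE_unit_interval:
  assumes "distributed M lborel X (beta_density p q)"
  shows "AE w in M. 0 < X w \<and> X w < 1"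
proof -
  have [measurable]: "X \<in> borel_measurable M"
    using distributed_measurable[OF assms] by simp
  have density_measurable: "beta_density p q \<in> borel_measurable lborel"
    using assms by (rule distributed_borel_measurable)
  have "AE x in distr M lborel X. 0 < x \<and> x < 1"
    unfolding distributed_distr_eq_density[OF assms] AE_density[OF density_measurable]
    by (auto simp: beta_density_def indicator_def)
  then show ?thesis by (subst (asm) AE_distr_iff) auto
qed

lemma (in prob_space) beta_distributed_integrable_power:
  assumes "distributed M lborel X (beta_density p q)"
  shows "integrable M (\<lambda>w. X w ^ k)"
proof (rule integrable_const_bound[where B = 1])
  show "AE w in M. norm (X w ^ k) \<le> 1"
    using beta_distributed_AE_unit_interval[OF assms]
    by eventually_elim (auto simp: abs_less_iff intro!: power_le_one)
qed (use distributed_measurable[OF assms] in simp)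

lemma (in prob_space) beta_distributed_integral_power:
  assumes pq: "p > 0" "q > 0" and D: "distributed M lborel X (beta_density p q)"
  shows "expectation (\<lambda>w. X w ^ k) = Beta (p + real k) q / Beta p q"
proof -
  have [measurable]: "X \<in> borel_measurable M"
    using distributed_measurable[OF D] by simp
  have B: "Beta p q > 0" using pq by (rule Beta_real_pos)
  define f where "f t = t powr (p + real k - 1) * (1 - t) powr (q - 1) / Beta p q" for t
  have "((\<lambda>t. t powr (p + real k - 1) * (1 - t) powr (q - 1)) has_integral Beta (p + real k) q)
          {0<..<1}"
    using has_integral_Beta_real[of "p + real k" q] pq by (simp add: has_integral_Icc_iff_Ioo)
  then have f_integral: "(f has_integral Beta (p + real k) q / Beta p q) {0<..<1}"
    unfolding f_def by (rule has_integral_divide)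
  have density_times_power:
    "beta_density p q t * ennreal (t ^ k) = ennreal (indicator {0<..<1} t * f t)" for t
  proof (cases "t \<in> {0<..<1}")
    case True
    then have "t powr (p + real k - 1) = t powr (p - 1) * t ^ k"
      by (simp add: powr_add[symmetric] powr_realpow[symmetric] algebra_simps)
    with True B show ?thesis
      by (simp add: f_def beta_density_def ennreal_mult'[symmetric] ennreal_mult''[symmetric])
  qed (simp add: beta_density_def)
  have "expectation (\<lambda>w. X w ^ k) = enn2real (\<integral>\<^sup>+ w. ennreal (X w ^ k) \<partial>M)"
    by (rule integral_eq_nn_integral)
       (use beta_distributed_AE_unit_interval[OF D] in auto)
  also have "(\<integral>\<^sup>+ w. ennreal (X w ^ k) \<partial>M) = (\<integral>\<^sup>+ t. beta_density p q t * ennreal (t ^ k) \<partial>lborel)"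
    by (rule distributed_nn_integral[OF D, symmetric]) simp
  also have "\<dots> = ennreal (Beta (p + real k) q / Beta p q)"
    unfolding density_times_power
    by (rule nn_integral_has_integral_lebesgue[OF _ f_integral]) (use B in \<open>simp add: f_def\<close>)
  finally show ?thesis
    using B pq by (simp add: Beta_real_pos)
qed

lemma (in prob_space) beta_distributed_mean:
  assumes "p > 0" "q > 0" "distributed M lborel X (beta_density p q)"
  shows "expectation X = p / (p + q)"
  using beta_distributed_integral_power[OF assms, of 1] Beta_plus1_left_real[OF assms(1,2)]
    Beta_real_pos[OF assms(1,2)] by simp

lemma (in prob_space) beta_distributed_second_moment:
  assumes "p > 0" "q > 0" "distributed M lborel X (beta_density p q)"
  shows "expectation (\<lambda>w. (X w)\<^sup>2) = p * (p + 1) / ((p + q) * (p + q + 1))"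
proof -
  have "Beta (p + 2) q = (p + 1) / (p + 1 + q) * (p / (p + q) * Beta p q)"
    using Beta_plus1_left_real[of "p + 1" q] Beta_plus1_left_real[of p q] assms(1,2)
    by (simp add: add_ac)
  then have "Beta (p + 2) q / Beta p q = (p + 1) / (p + 1 + q) * (p / (p + q))"
    using Beta_real_pos[OF assms(1,2)] by simp
  then show ?thesis
    using beta_distributed_integral_power[OF assms, of 2] by (simp add: add_ac mult_ac)
qed

lemma (in prob_space) indep_vars_integral_prod_power:
  fixes V :: "'i \<Rightarrow> 'a \<Rightarrow> real"
  assumes "finite I" "indep_vars (\<lambda>_. borel) V I"
    and "\<And>i n. i \<in> I \<Longrightarrow> integrable M (\<lambda>w. V i w ^ n)"
  shows "integrable M (\<lambda>w. \<Prod>i\<in>I. V i w ^ k i)"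
    and "expectation (\<lambda>w. \<Prod>i\<in>I. V i w ^ k i) = (\<Prod>i\<in>I. expectation (\<lambda>w. V i w ^ k i))"
proof -
  have powers_indep: "indep_vars (\<lambda>_. borel) (\<lambda>i w. V i w ^ k i) I"
    by (rule indep_vars_compose2[OF assms(2)]) simp
  show "integrable M (\<lambda>w. \<Prod>i\<in>I. V i w ^ k i)"
    by (rule indep_vars_integrable[OF assms(1) powers_indep assms(3)])
  show "expectation (\<lambda>w. \<Prod>i\<in>I. V i w ^ k i) = (\<Prod>i\<in>I. expectation (\<lambda>w. V i w ^ k i))"
    by (rule indep_vars_lebesgue_integral[OF assms(1) powers_indep assms(3)])
qed

lemma (in prob_space) C12_eq_moments:
  assumes "integrable M S1" "integrable M S2" "integrable M (\<lambda>w. S1 w * S2 w)"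
  shows "C12 M S1 S2 =
    expectation (\<lambda>w. S1 w * S2 w) /
      (expectation S1 + expectation S2 - expectation (\<lambda>w. S1 w * S2 w)) *
    sqrt ((2 * expectation S1 - expectation (\<lambda>w. (S1 w)\<^sup>2)) *
          (2 * expectation S2 - expectation (\<lambda>w. (S2 w)\<^sup>2)) /
          (expectation (\<lambda>w. (S1 w)\<^sup>2) * expectation (\<lambda>w. (S2 w)\<^sup>2)))"
proof -
  have "(\<lambda>w. (1 - S1 w) * (1 - S2 w)) = (\<lambda>w. 1 - S1 w - S2 w + S1 w * S2 w)"
    by (simp add: algebra_simps)
  then have "expectation (\<lambda>w. (1 - S1 w) * (1 - S2 w)) =
      1 - expectation S1 - expectation S2 + expectation (\<lambda>w. S1 w * S2 w)"
    using assms by (simp add: prob_space)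
  then show ?thesis unfolding C12_def by simp
qed

lemma stick_moment_ratio:
  fixes y :: real
  assumes "y > 0"
  shows "(2 * (1 / y) - 2 / (y * (y + 1))) / (2 / (y * (y + 1))) = y"
  using assms by (simp add: divide_simps)

lemma prefactor_common_factor_sticks:
  fixes x y :: real
  assumes "x > 1" "y > x"
  shows "(x + 1) / (x * y * (y + 1)) / (1 / y + 1 / y - (x + 1) / (x * y * (y + 1))) =
    (x + 1) / (2 * x * (y + 1) - (x + 1))"
proof -
  have "x * 2 < x * (y + 1)"
    using assms by (intro mult_strict_left_mono) simp_all
  then have "2 * x * (y + 1) - (x + 1) \<noteq> 0"
    using assms(1) unfolding ring_distribs by linarith
  moreover have "1 / y + 1 / y - (x + 1) / (x * y * (y + 1)) =
      (2 * x * (y + 1) - (x + 1)) / (x * y * (y + 1))"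
    using assms by (simp add: divide_simps)
  ultimately show ?thesis
    using assms by simp
qed

lemma prefactor_nested_sticks:
  fixes x y :: real
  assumes "x > 1" "y > x"
  shows "2 / ((x + 1) * y) / (1 / y + 1 / x - 2 / ((x + 1) * y)) =
    2 * x / ((x + 1) * (x + y - 1) - (x - 1))"
proof -
  have "x < x * x" "0 < x * y" using assms by simp_all
  then have "(x + 1) * (x + y - 1) - (x - 1) \<noteq> 0"
    using assms unfolding ring_distribs by linarith
  moreover have "1 / y + 1 / x - 2 / ((x + 1) * y) =
      ((x + 1) * (x + y - 1) - (x - 1)) / (x * (x + 1) * y)"
    using assms by (simp add: divide_simps) (simp add: algebra_simps)
  ultimately show ?thesis
    using assms by simp
qed

lemma (in prob_space) C12_sticks_with_common_factor:
  fixes V :: "nat \<Rightarrow> 'a \<Rightarrow> real"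
  assumes "a1 > 0" "a2 > 0"
    and indep: "indep_vars (\<lambda>_. borel) V {0, 1, 2}"
    and D0: "distributed M lborel (V 0) (beta_density (1 + a1) a2)"
    and D1: "distributed M lborel (V 1) (beta_density 1 a1)"
    and D2: "distributed M lborel (V 2) (beta_density 1 a1)"
  shows "C12 M (\<lambda>w. V 0 w * V 1 w) (\<lambda>w. V 0 w * V 2 w) =
    (a1 + a2 + 1) * (a1 + 2) / (2 * (a1 + 1) * (a1 + a2 + 2) - (a1 + 2))"
proof -
  define x y where "x = 1 + a1" and "y = 1 + a1 + a2"
  have "x > 1" "y > x" using assms(1,2) by (simp_all add: x_def y_def)
  have powers_integrable: "\<And>i n. i \<in> {0, 1, 2} \<Longrightarrow> integrable M (\<lambda>w. V i w ^ n)"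
    using D0 D1 D2 beta_distributed_integrable_power by auto
  have moment:
    "integrable M (\<lambda>w. V 0 w ^ k0 * (V 1 w ^ k1 * V 2 w ^ k2))"
    "expectation (\<lambda>w. V 0 w ^ k0 * (V 1 w ^ k1 * V 2 w ^ k2)) =
       expectation (\<lambda>w. V 0 w ^ k0) * (expectation (\<lambda>w. V 1 w ^ k1) * expectation (\<lambda>w. V 2 w ^ k2))"
    for k0 k1 k2
    using indep_vars_integral_prod_power[OF _ indep powers_integrable,
        of "\<lambda>i. if i = 0 then k0 else if i = 1 then k1 else k2"] by simp_all
  have V0: "expectation (V 0) = x / y" "expectation (\<lambda>w. (V 0 w)\<^sup>2) = x * (x + 1) / (y * (y + 1))"
    using beta_distributed_mean[OF _ _ D0] beta_distributed_second_moment[OF _ _ D0] assms(1,2)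
    by (simp_all add: x_def y_def add_ac)
  have V1: "expectation (V 1) = 1 / x" "expectation (\<lambda>w. (V 1 w)\<^sup>2) = 2 / (x * (x + 1))"
    using beta_distributed_mean[OF _ _ D1] beta_distributed_second_moment[OF _ _ D1] assms(1)
    by (simp_all add: x_def add_ac)
  have V2: "expectation (V 2) = 1 / x" "expectation (\<lambda>w. (V 2 w)\<^sup>2) = 2 / (x * (x + 1))"
    using beta_distributed_mean[OF _ _ D2] beta_distributed_second_moment[OF _ _ D2] assms(1)
    by (simp_all add: x_def add_ac)
  have stick1:
    "integrable M (\<lambda>w. V 0 w * V 1 w)" "expectation (\<lambda>w. V 0 w * V 1 w) = 1 / y"
    "expectation (\<lambda>w. (V 0 w * V 1 w)\<^sup>2) = 2 / (y * (y + 1))"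
    using moment[of 1 1 0] moment[of 2 2 0] V0 V1 \<open>x > 1\<close>
    by (simp_all add: power_mult_distrib prob_space)
  have stick2:
    "integrable M (\<lambda>w. V 0 w * V 2 w)" "expectation (\<lambda>w. V 0 w * V 2 w) = 1 / y"
    "expectation (\<lambda>w. (V 0 w * V 2 w)\<^sup>2) = 2 / (y * (y + 1))"
    using moment[of 1 0 1] moment[of 2 0 2] V0 V2 \<open>x > 1\<close>
    by (simp_all add: power_mult_distrib prob_space)
  have product_eq: "(\<lambda>w. V 0 w * V 1 w * (V 0 w * V 2 w)) = (\<lambda>w. V 0 w ^ 2 * (V 1 w ^ 1 * V 2 w ^ 1))"
    by (simp add: fun_eq_iff power2_eq_square)
  have product:
    "integrable M (\<lambda>w. V 0 w * V 1 w * (V 0 w * V 2 w))"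
    "expectation (\<lambda>w. V 0 w * V 1 w * (V 0 w * V 2 w)) = (x + 1) / (x * y * (y + 1))"
    unfolding product_eq using moment[of 2 1 1] V0 V1 V2 \<open>x > 1\<close> by simp_all
  have "C12 M (\<lambda>w. V 0 w * V 1 w) (\<lambda>w. V 0 w * V 2 w) =
      (x + 1) / (x * y * (y + 1)) / (1 / y + 1 / y - (x + 1) / (x * y * (y + 1))) *
      sqrt ((2 * (1 / y) - 2 / (y * (y + 1))) * (2 * (1 / y) - 2 / (y * (y + 1))) /
            (2 / (y * (y + 1)) * (2 / (y * (y + 1)))))"
    by (simp only: C12_eq_moments[OF stick1(1) stick2(1) product(1)]
        stick1(2,3) stick2(2,3) product(2))
  also have "sqrt ((2 * (1 / y) - 2 / (y * (y + 1))) * (2 * (1 / y) - 2 / (y * (y + 1))) /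
      (2 / (y * (y + 1)) * (2 / (y * (y + 1))))) = y"
    using \<open>y > x\<close> \<open>x > 1\<close>
    by (simp only: times_divide_times_eq[symmetric] stick_moment_ratio) simp
  also have "(x + 1) / (x * y * (y + 1)) / (1 / y + 1 / y - (x + 1) / (x * y * (y + 1))) =
      (x + 1) / (2 * x * (y + 1) - (x + 1))"
    using \<open>x > 1\<close> \<open>y > x\<close> by (rule prefactor_common_factor_sticks)
  finally show ?thesis
    by (simp add: x_def y_def algebra_simps)
qed

lemma (in prob_space) C12_stick_and_its_factor:
  fixes V :: "nat \<Rightarrow> 'a \<Rightarrow> real"
  assumes "a1 > 0" "a2 > 0"
    and indep: "indep_vars (\<lambda>_. borel) V {0, 1}"
    and D0: "distributed M lborel (V 0) (beta_density 1 a1)"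
    and D1: "distributed M lborel (V 1) (beta_density (1 + a1) a2)"
  shows "C12 M (\<lambda>w. V 0 w * V 1 w) (V 0) =
    2 * (a1 + 1) / ((a1 + 2) * (2 * a1 + a2 + 1) - a1) * sqrt ((a1 + 1) * (a1 + a2 + 1))"
proof -
  define x y where "x = 1 + a1" and "y = 1 + a1 + a2"
  have "x > 1" "y > x" using assms(1,2) by (simp_all add: x_def y_def)
  have powers_integrable: "\<And>i n. i \<in> {0, 1} \<Longrightarrow> integrable M (\<lambda>w. V i w ^ n)"
    using D0 D1 beta_distributed_integrable_power by auto
  have moment:
    "integrable M (\<lambda>w. V 0 w ^ k0 * V 1 w ^ k1)"
    "expectation (\<lambda>w. V 0 w ^ k0 * V 1 w ^ k1) =
       expectation (\<lambda>w. V 0 w ^ k0) * expectation (\<lambda>w. V 1 w ^ k1)"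
    for k0 k1
    using indep_vars_integral_prod_power[OF _ indep powers_integrable,
        of "\<lambda>i. if i = 0 then k0 else k1"] by simp_all
  have V0: "expectation (V 0) = 1 / x" "expectation (\<lambda>w. (V 0 w)\<^sup>2) = 2 / (x * (x + 1))"
    using beta_distributed_mean[OF _ _ D0] beta_distributed_second_moment[OF _ _ D0] assms(1)
    by (simp_all add: x_def add_ac)
  have V1: "expectation (V 1) = x / y" "expectation (\<lambda>w. (V 1 w)\<^sup>2) = x * (x + 1) / (y * (y + 1))"
    using beta_distributed_mean[OF _ _ D1] beta_distributed_second_moment[OF _ _ D1] assms(1,2)
    by (simp_all add: x_def y_def add_ac)
  have stick1:
    "integrable M (\<lambda>w. V 0 w * V 1 w)" "expectation (\<lambda>w. V 0 w * V 1 w) = 1 / y"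
    "expectation (\<lambda>w. (V 0 w * V 1 w)\<^sup>2) = 2 / (y * (y + 1))"
    using moment[of 1 1] moment[of 2 2] V0 V1 \<open>x > 1\<close>
    by (simp_all add: power_mult_distrib)
  have stick2: "integrable M (V 0)"
    using powers_integrable[of 0 1] by simp
  have product_eq: "(\<lambda>w. V 0 w * V 1 w * V 0 w) = (\<lambda>w. V 0 w ^ 2 * V 1 w ^ 1)"
    by (simp add: fun_eq_iff power2_eq_square)
  have product:
    "integrable M (\<lambda>w. V 0 w * V 1 w * V 0 w)"
    "expectation (\<lambda>w. V 0 w * V 1 w * V 0 w) = 2 / ((x + 1) * y)"
    unfolding product_eq using moment[of 2 1] V0 V1 \<open>x > 1\<close> by simp_all
  have "C12 M (\<lambda>w. V 0 w * V 1 w) (V 0) =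
      2 / ((x + 1) * y) / (1 / y + 1 / x - 2 / ((x + 1) * y)) *
      sqrt ((2 * (1 / y) - 2 / (y * (y + 1))) * (2 * (1 / x) - 2 / (x * (x + 1))) /
            (2 / (y * (y + 1)) * (2 / (x * (x + 1)))))"
    by (simp only: C12_eq_moments[OF stick1(1) stick2 product(1)] stick1(2,3) V0 product(2))
  also have "sqrt ((2 * (1 / y) - 2 / (y * (y + 1))) * (2 * (1 / x) - 2 / (x * (x + 1))) /
      (2 / (y * (y + 1)) * (2 / (x * (x + 1))))) = sqrt (y * x)"
    using \<open>y > x\<close> \<open>x > 1\<close>
    by (simp only: times_divide_times_eq[symmetric] stick_moment_ratio)
  also have "2 / ((x + 1) * y) / (1 / y + 1 / x - 2 / ((x + 1) * y)) =
      2 * x / ((x + 1) * (x + y - 1) - (x - 1))"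
    using \<open>x > 1\<close> \<open>y > x\<close> by (rule prefactor_nested_sticks)
  finally show ?thesis
    by (simp add: x_def y_def algebra_simps)
qed

theorem corollary2:
  fixes M :: "'a measure" and a1 a2 :: real
  assumes "prob_space M" and "a1 > 0" and "a2 > 0"
  shows "(\<forall>V :: nat \<Rightarrow> 'a \<Rightarrow> real.
            prob_space.indep_vars M (\<lambda>_. borel) V {0, 1, 2} \<and>
            distributed M lborel (V 0) (beta_density (1 + a1) a2) \<and>
            distributed M lborel (V 1) (beta_density 1 a1) \<and>
            distributed M lborel (V 2) (beta_density 1 a1) \<longrightarrow>
            C12 M (\<lambda>w. V 0 w * V 1 w) (\<lambda>w. V 0 w * V 2 w) =
              (a1 + a2 + 1) * (a1 + 2) / (2 * (a1 + 1) * (a1 + a2 + 2) - (a1 + 2)))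
       \<and> (\<forall>V :: nat \<Rightarrow> 'a \<Rightarrow> real.
            prob_space.indep_vars M (\<lambda>_. borel) V {0, 1} \<and>
            distributed M lborel (V 0) (beta_density 1 a1) \<and>
            distributed M lborel (V 1) (beta_density (1 + a1) a2) \<longrightarrow>
            C12 M (\<lambda>w. V 0 w * V 1 w) (V 0) =
              2 * (a1 + 1) / ((a1 + 2) * (2 * a1 + a2 + 1) - a1) *
              sqrt ((a1 + 1) * (a1 + a2 + 1)))"
proof -
  interpret prob_space M by fact
  show ?thesis
    using C12_sticks_with_common_factor[OF assms(2,3)] C12_stick_and_its_factor[OF assms(2,3)]
    by blast
qed

end
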